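(* $\mathcal{H}_{R_0,r}(q)$ is isomorphic as an $R_0$-algebra to the $\mathbb{Z}_2$-crossed product $\mathcal{H}^1_{R_0,r}(q)^{\psi_0}_{\alpha_0}[\mathbb{Z}_2]$; an isomorphism is given by $a_1u_1+a_2u_{-1}\mapsto a_1+a_2T'_1$ ($a_1,a_2\in\mathcal{H}^1_{R_0,r}(q)$). In particular $\mathcal{H}_{R_0,r}(q)=\mathcal{H}^1_{R_0,r}(q)\oplus\mathcal{H}^1_{R_0,r}(q)T'_1$.
   Context: $R_0$ is a commutative domain with invertible elements $q$, $2$, $q+q^{-1}$; $r\ge2$; $\mathcal{H}_{R_0,r}(q)$ is the type $A$ Iwahori–Hecke algebra with generators $T_1,\dots,T_{r-1}$, relations $T_i^2=(q-q^{-1})T_i+1$, $T_iT_{i+1}T_i=T_{i+1}T_iT_{i+1}$, $T_iT_j=T_jT_i$ ($|i-j|>1$); $T'_i=\frac{2T_i-(q-q^{-1})}{q+q^{-1}}$; the Goldman involution is the algebra automorphism with $\hat T_i=(q-q^{-1})-T_i$, and $\mathcal{H}^1_{R_0,r}(q)=\{X:\hat X=X\}$. $\mathbb{Z}_2=\{1,-1\}$ multiplicatively. $\psi_0(1)=\mathrm{id}$, $\psi_0(-1)(T)=T'_1TT'_1$, $\alpha_0\equiv1$. For a crossed system $(A,G,\psi,\alpha)$ (maps $\psi:G\to\operatorname{Aut}(A)$, ${}^\sigma a:=\psi(\sigma)(a)$, and $\alpha:G\times G\to A^\times$ satisfying ${}^\sigma({}^\tau a)=\alpha(\sigma,\tau){}^{\sigma\tau}a\,\alpha(\sigma,\tau)^{-1}$,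 the cocycle identity ${}^{\sigma_1}\alpha(\sigma_2,\sigma_3)\alpha(\sigma_1,\sigma_2\sigma_3)=\alpha(\sigma_1,\sigma_2)\alpha(\sigma_1\sigma_2,\sigma_3)$, and $\alpha(\sigma,1)=\alpha(1,\sigma)=1$), the crossed product $A^\psi_\alpha[G]$ is the free left $A$-module with basis $\{u_\sigma:\sigma\in G\}$ and multiplication $(a_1u_\sigma)(a_2u_\tau)=a_1\,{}^\sigma a_2\,\alpha(\sigma,\tau)\,u_{\sigma\tau}$. *)

theory Defs
  imports "HOL-Library.Poly_Mapping"
begin

datatype word = Word "nat list"

fun letters :: "word \<Rightarrow> nat list" where
  "letters (Word xs) = xs"

instantiation word :: monoid_add
begin
definition zero_word :: word where "zero_word = Word []"
fun plus_word :: "word \<Rightarrow> word \<Rightarrow> word" where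
  "plus_word (Word a) (Word b) = Word (a @ b)"
instance
proof
  fix a b c :: word
  show "a + b + c = a + (b + c)" by (cases a; cases b; cases c) simp
  show "0 + a = a" by (cases a) (simp add: zero_word_def)
  show "a + 0 = a" by (cases a) (simp add: zero_word_def)
qed
end

text \<open>Noncommutative polynomials: finitely supported maps from words to coefficients;
  the product is concatenation-convolution, so this is the free R_0-algebra.\<close>
type_synonym 'r freealg = "word \<Rightarrow>\<^sub>0 'r"

definition fconst :: "'r::zero \<Rightarrow> 'r freealg" where
  "fconst c = Poly_Mapping.single (Word []) c"

definition gen :: "nat \<Rightarrow> 'r::{zero,one} freealg" where
  "gen i = Poly_Mapping.single (Word [i]) 1"

text \<open>The free algebra on the generators T_1, ..., T_{r-1}.\<close>
definition free_carrier :: "nat \<Rightarrow> ('r::zero freealg) set" where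
  "free_carrier r = {f. \<forall>w\<in>Poly_Mapping.keys f. set (letters w) \<subseteq> {1..<r}}"

text \<open>Defining relations of the Iwahori-Hecke algebra (qi plays the role of q^{-1}).\<close>
definition hecke_relators :: "'r::comm_ring_1 \<Rightarrow> 'r \<Rightarrow> nat \<Rightarrow> 'r freealg set" where
  "hecke_relators q qi r =
     {gen i * gen i - (fconst (q - qi) * gen i + 1) | i. 1 \<le> i \<and> i < r}
   \<union> {gen i * gen (i+1) * gen i - gen (i+1) * gen i * gen (i+1) | i. 1 \<le> i \<and> i + 1 < r}
   \<union> {gen i * gen j - gen j * gen i | i j. 1 \<le> i \<and> i < r \<and> 1 \<le> j \<and> j < r \<and> (i + 1 < j \<or> j + 1 < i)}"

inductive_set hecke_ideal :: "'r::comm_ring_1 \<Rightarrow> 'r \<Rightarrow> nat \<Rightarrow> 'r freealg set"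
  for q qi r where
  zero: "0 \<in> hecke_ideal q qi r"
| gen: "g \<in> hecke_relators q qi r \<Longrightarrow> a \<in> free_carrier r \<Longrightarrow> b \<in> free_carrier r
        \<Longrightarrow> a * g * b \<in> hecke_ideal q qi r"
| add: "x \<in> hecke_ideal q qi r \<Longrightarrow> y \<in> hecke_ideal q qi r \<Longrightarrow> x + y \<in> hecke_ideal q qi r"

text \<open>The Hecke algebra H_{R_0,r}(q) is free_carrier r modulo hecke_eq.\<close>
definition hecke_eq :: "'r::comm_ring_1 \<Rightarrow> 'r \<Rightarrow> nat \<Rightarrow> 'r freealg \<Rightarrow> 'r freealg \<Rightarrow> bool" where
  "hecke_eq q qi r x y \<longleftrightarrow> x - y \<in> hecke_ideal q qi r"

definition word_eval :: "(nat \<Rightarrow> 'r::comm_ring_1 freealg) \<Rightarrow> word \<Rightarrow> 'r freealg" where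
  "word_eval phi w = prod_list (map phi (letters w))"

definition free_eval :: "(nat \<Rightarrow> 'r::comm_ring_1 freealg) \<Rightarrow> 'r freealg \<Rightarrow> 'r freealg" where
  "free_eval phi f = (\<Sum>w\<in>Poly_Mapping.keys f. fconst (Poly_Mapping.lookup f w) * word_eval phi w)"

definition goldman :: "'r::comm_ring_1 \<Rightarrow> 'r \<Rightarrow> 'r freealg \<Rightarrow> 'r freealg" where
  "goldman q qi f = free_eval (\<lambda>i. fconst (q - qi) - gen i) f"

definition hecke1 :: "'r::comm_ring_1 \<Rightarrow> 'r \<Rightarrow> nat \<Rightarrow> 'r freealg set" where
  "hecke1 q qi r = {X \<in> free_carrier r. hecke_eq q qi r (goldman q qi X) X}"

text \<open>T'_1 = (2 T_1 - (q - q^{-1})) / (q + q^{-1}); e plays the role of (q + q^{-1})^{-1}.\<close>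
definition Tprime :: "'r::comm_ring_1 \<Rightarrow> 'r \<Rightarrow> 'r \<Rightarrow> 'r freealg" where
  "Tprime e q qi = fconst e * (2 * gen 1 - fconst (q - qi))"

definition Z2 :: "int set" where "Z2 = {1, -1}"

definition psi0 :: "'a::ring_1 \<Rightarrow> int \<Rightarrow> 'a \<Rightarrow> 'a" where
  "psi0 T \<sigma> X = (if \<sigma> = 1 then X else T * X * T)"

definition alpha0 :: "int \<Rightarrow> int \<Rightarrow> 'a::ring_1" where
  "alpha0 \<sigma> \<tau> = 1"

text \<open>Elements of A^psi_alpha[G]: sum over sigma of x(sigma) u_sigma, with x(sigma) \<in> A.\<close>
definition cp_carrier :: "'g set \<Rightarrow> 'a::zero set \<Rightarrow> ('g \<Rightarrow> 'a) set" where
  "cp_carrier G A = {x. (\<forall>\<sigma>\<in>G. x \<sigma> \<in> A) \<and> (\<forall>\<sigma>. \<sigma> \<notin> G \<longrightarrow> x \<sigma> = 0)}"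

definition cp_mult :: "'g::monoid_mult set \<Rightarrow> ('g \<Rightarrow> 'a \<Rightarrow> 'a) \<Rightarrow> ('g \<Rightarrow> 'g \<Rightarrow> 'a::ring_1)
                        \<Rightarrow> ('g \<Rightarrow> 'a) \<Rightarrow> ('g \<Rightarrow> 'a) \<Rightarrow> ('g \<Rightarrow> 'a)" where
  "cp_mult G psi alpha x y =
     (\<lambda>\<rho>. \<Sum>\<sigma>\<in>G. \<Sum>\<tau>\<in>G. if \<sigma> * \<tau> = \<rho> then x \<sigma> * psi \<sigma> (y \<tau>) * alpha \<sigma> \<tau> else 0)"

definition cp_one :: "'g::monoid_mult \<Rightarrow> 'a::ring_1" where
  "cp_one = (\<lambda>\<sigma>. if \<sigma> = 1 then 1 else 0)"

definition cp_add :: "('g \<Rightarrow> 'a::plus) \<Rightarrow> ('g \<Rightarrow> 'a) \<Rightarrow> ('g \<Rightarrow> 'a)" where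
  "cp_add x y = (\<lambda>\<sigma>. x \<sigma> + y \<sigma>)"

definition cp_smult :: "'r::comm_ring_1 \<Rightarrow> (int \<Rightarrow> 'r freealg) \<Rightarrow> (int \<Rightarrow> 'r freealg)" where
  "cp_smult c x = (\<lambda>\<sigma>. fconst c * x \<sigma>)"

definition Phi :: "'a::ring_1 \<Rightarrow> (int \<Rightarrow> 'a) \<Rightarrow> 'a" where
  "Phi T x = x 1 + x (-1) * T"

end

(* The Goldman involution # is an algebra automorphism of the free algebra which maps the Hecke
   ideal into itself and sends T'_1 to -T'_1, while T'_1^2 = 1 in the Hecke algebra (this is
   where q q^-1 = 1 and e (q + q^-1) = 1 enter).  Since 2 is invertible, every h splits as
   a_1 + a_2 T'_1 with the #-fixed coefficients a_1 = (h + #h)/2 and a_2 = (h - #h)/2 T'_1.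
   The splitting is unique: applying # to a_1 + a_2 T'_1 = 0 gives a_1 - a_2 T'_1 = 0, so
   2 a_1 = 0 and a_2 = a_2 T'_1^2 = 0.  Conjugation by T'_1 preserves H^1 and squares to the
   identity, and the product of the crossed product is carried to that of H because
   T'_1 a = (T'_1 a T'_1) T'_1. *)

theory Submission
  imports Defs
begin

lemma poly_mapping_sum_single:
  fixes f :: "'a \<Rightarrow>\<^sub>0 'b::comm_monoid_add"
  shows "f = (\<Sum>k\<in>Poly_Mapping.keys f. Poly_Mapping.single k (Poly_Mapping.lookup f k))"
  by (rule poly_mapping_eqI) (simp add: lookup_sum lookup_single when_def in_keys_iff)

lemma letters_plus [simp]: "letters (v + w) = letters v @ letters w"
  by (cases v; cases w) simp

lemma fconst_0 [simp]: "fconst 0 = 0"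
  by (simp add: fconst_def)

lemma fconst_1 [simp]: "fconst (1::'r::comm_ring_1) = 1"
  by (simp add: fconst_def flip: zero_word_def)

lemma fconst_numeral: "fconst (numeral n :: 'r::comm_ring_1) = numeral n"
  by (simp add: fconst_def flip: zero_word_def)

lemma fconst_add: "fconst (a + b :: 'r::comm_ring_1) = fconst a + fconst b"
  by (simp add: fconst_def single_add)

lemma fconst_diff: "fconst (a - b :: 'r::comm_ring_1) = fconst a - fconst b"
  by (simp add: fconst_def single_diff)

lemma fconst_mult: "fconst (a * b :: 'r::comm_ring_1) = fconst a * fconst b"
  by (simp add: fconst_def mult_single flip: zero_word_def)

lemma fconst_mult_single: "fconst (c::'r::comm_ring_1) * Poly_Mapping.single w d = Poly_Mapping.single w (c * d)"
  by (simp add: fconst_def mult_single flip: zero_word_def)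

lemma single_mult_fconst: "Poly_Mapping.single w d * fconst (c::'r::comm_ring_1) = Poly_Mapping.single w (c * d)"
  by (simp add: fconst_def mult_single mult.commute flip: zero_word_def)

lemma fconst_commute: "fconst (c::'r::comm_ring_1) * x = x * fconst c"
proof -
  have "fconst c * x = (\<Sum>k\<in>Poly_Mapping.keys x. fconst c * Poly_Mapping.single k (Poly_Mapping.lookup x k))"
    by (subst poly_mapping_sum_single[of x]) (simp add: sum_distrib_left)
  also have "\<dots> = (\<Sum>k\<in>Poly_Mapping.keys x. Poly_Mapping.single k (Poly_Mapping.lookup x k) * fconst c)"
    by (simp add: fconst_mult_single single_mult_fconst)
  also have "\<dots> = x * fconst c"
    by (subst (2) poly_mapping_sum_single[of x]) (simp add: sum_distrib_right)
  finally show ?thesis .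
qed

lemma single_eq_fconst_mult_gens:
  "Poly_Mapping.single w c = fconst (c::'r::comm_ring_1) * prod_list (map gen (letters w))"
proof -
  have "prod_list (map gen xs) = (Poly_Mapping.single (Word xs) 1 :: 'r freealg)" for xs
    by (induction xs) (simp_all add: gen_def mult_single flip: zero_word_def)
  then show ?thesis
    by (cases w) (simp add: fconst_mult_single)
qed

lemma fconst_in_free_carrier [simp]: "fconst c \<in> free_carrier r"
  by (simp add: fconst_def free_carrier_def)

lemma zero_in_free_carrier [simp]: "0 \<in> free_carrier r"
  by (simp add: free_carrier_def)

lemma one_in_free_carrier [simp]: "(1::'r::comm_ring_1 freealg) \<in> free_carrier r"
  using fconst_in_free_carrier[of "1::'r" r] by simp

lemma numeral_in_free_carrier [simp]: "(numeral n :: 'r::comm_ring_1 freealg) \<in> free_carrier r"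
  using fconst_in_free_carrier[of "numeral n :: 'r" r] by (simp add: fconst_numeral)

lemma gen_in_free_carrier: "1 \<le> i \<Longrightarrow> i < r \<Longrightarrow> (gen i :: 'r::comm_ring_1 freealg) \<in> free_carrier r"
  by (simp add: gen_def free_carrier_def)

lemma add_in_free_carrier [simp]:
  "f \<in> free_carrier r \<Longrightarrow> g \<in> free_carrier r \<Longrightarrow> (f + g :: 'r::comm_ring_1 freealg) \<in> free_carrier r"
  using keys_add[of f g] by (auto simp: free_carrier_def)

lemma uminus_in_free_carrier [simp]:
  "f \<in> free_carrier r \<Longrightarrow> (- f :: 'r::comm_ring_1 freealg) \<in> free_carrier r"
  by (simp add: free_carrier_def)

lemma diff_in_free_carrier [simp]:
  "f \<in> free_carrier r \<Longrightarrow> g \<in> free_carrier r \<Longrightarrow> (f - g :: 'r::comm_ring_1 freealg) \<in> free_carrier r"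
  using add_in_free_carrier[of f r "- g"] by simp

lemma mult_in_free_carrier [simp]:
  "f \<in> free_carrier r \<Longrightarrow> g \<in> free_carrier r \<Longrightarrow> (f * g :: 'r::comm_ring_1 freealg) \<in> free_carrier r"
  using keys_mult[of f g] by (fastforce simp: free_carrier_def)

lemma sum_in_free_carrier:
  "(\<And>x. x \<in> S \<Longrightarrow> f x \<in> free_carrier r) \<Longrightarrow> (\<Sum>x\<in>S. f x :: 'r::comm_ring_1 freealg) \<in> free_carrier r"
  by (induction S rule: infinite_finite_induct) auto

lemma prod_list_in_free_carrier:
  "(\<And>x. x \<in> set xs \<Longrightarrow> x \<in> free_carrier r) \<Longrightarrow> (prod_list xs :: 'r::comm_ring_1 freealg) \<in> free_carrier r"
  by (induction xs) auto

lemma free_eval_add: "free_eval phi (f + g) = free_eval phi f + free_eval phi g"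
  unfolding free_eval_def by (rule setsum_keys_plus_distrib) (simp_all add: fconst_add distrib_right)

lemma free_eval_0 [simp]: "free_eval phi 0 = 0"
  by (simp add: free_eval_def)

lemma free_eval_uminus: "free_eval phi (- f) = - free_eval phi f"
  using free_eval_add[of phi "- f" f] by (simp add: eq_neg_iff_add_eq_0)

lemma free_eval_diff: "free_eval phi (f - g) = free_eval phi f - free_eval phi g"
  using free_eval_add[of phi f "- g"] by (simp add: free_eval_uminus)

lemma free_eval_sum: "free_eval phi (\<Sum>x\<in>S. f x) = (\<Sum>x\<in>S. free_eval phi (f x))"
  by (induction S rule: infinite_finite_induct) (auto simp: free_eval_add)

lemma free_eval_single: "free_eval phi (Poly_Mapping.single w c) = fconst c * word_eval phi w"
  by (cases "c = 0") (simp_all add: free_eval_def)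

lemma free_eval_mult_single:
  "free_eval phi (Poly_Mapping.single v c * Poly_Mapping.single w d)
   = free_eval phi (Poly_Mapping.single v c) * free_eval phi (Poly_Mapping.single w d)"
proof -
  have "free_eval phi (Poly_Mapping.single v c * Poly_Mapping.single w d)
       = fconst c * fconst d * (word_eval phi v * word_eval phi w)"
    by (simp add: mult_single free_eval_single word_eval_def fconst_mult)
  also have "\<dots> = fconst c * word_eval phi v * (fconst d * word_eval phi w)"
    by (metis fconst_commute mult.assoc)
  finally show ?thesis by (simp add: free_eval_single)
qed

lemma free_eval_mult: "free_eval phi (f * g) = free_eval phi f * free_eval phi g"
proof -
  let ?m = "\<lambda>h k. Poly_Mapping.single k (Poly_Mapping.lookup h k)"
  have "f * g = (\<Sum>k\<in>Poly_Mapping.keys f. \<Sum>l\<in>Poly_Mapping.keys g. ?m f k * ?m g l)"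
    by (subst (1) poly_mapping_sum_single[of f], subst (1) poly_mapping_sum_single[of g])
       (simp add: sum_distrib_left sum_distrib_right, rule sum.swap)
  then have "free_eval phi (f * g)
      = (\<Sum>k\<in>Poly_Mapping.keys f. \<Sum>l\<in>Poly_Mapping.keys g. free_eval phi (?m f k) * free_eval phi (?m g l))"
    by (simp add: free_eval_sum free_eval_mult_single)
  also have "\<dots> = free_eval phi (\<Sum>k\<in>Poly_Mapping.keys f. ?m f k) * free_eval phi (\<Sum>l\<in>Poly_Mapping.keys g. ?m g l)"
    by (simp add: free_eval_sum sum_distrib_left sum_distrib_right, rule sum.swap)
  finally show ?thesis by (simp flip: poly_mapping_sum_single)
qed

lemma free_eval_fconst [simp]: "free_eval phi (fconst c) = fconst c"
  by (simp add: fconst_def free_eval_single word_eval_def)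

lemma free_eval_1 [simp]: "free_eval phi (1::'r::comm_ring_1 freealg) = 1"
  by (metis fconst_1 free_eval_fconst)

lemma free_eval_gen [simp]: "free_eval phi (gen i) = phi i"
  by (simp add: gen_def free_eval_single word_eval_def)

lemma free_eval_prod_list: "free_eval phi (prod_list xs) = prod_list (map (free_eval phi) xs)"
  by (induction xs) (auto simp: free_eval_mult)

lemma free_eval_in_free_carrier:
  assumes phi: "\<And>i. 1 \<le> i \<Longrightarrow> i < r \<Longrightarrow> phi i \<in> free_carrier r" and f: "f \<in> free_carrier r"
  shows "free_eval phi f \<in> free_carrier r"
  unfolding free_eval_def word_eval_def
proof (intro sum_in_free_carrier mult_in_free_carrier fconst_in_free_carrier prod_list_in_free_carrier)
  fix w x assume "w \<in> Poly_Mapping.keys f" and "x \<in> set (map phi (letters w))"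
  then obtain i where "i \<in> set (letters w)" "x = phi i" by auto
  moreover have "set (letters w) \<subseteq> {1..<r}"
    using f \<open>w \<in> Poly_Mapping.keys f\<close> by (simp add: free_carrier_def)
  ultimately show "x \<in> free_carrier r" using phi by auto
qed

section \<open>The Hecke ideal\<close>

lemma relator_in_hecke_ideal: "g \<in> hecke_relators q qi r \<Longrightarrow> g \<in> hecke_ideal q qi r"
  using hecke_ideal.gen[of g q qi r 1 1] by simp

lemma hecke_ideal_mult_left:
  "x \<in> hecke_ideal q qi r \<Longrightarrow> c \<in> free_carrier r \<Longrightarrow> c * x \<in> hecke_ideal q qi r"
proof (induction rule: hecke_ideal.induct)
  case (gen g a b)
  then show ?case using hecke_ideal.gen[of g q qi r "c * a" b] by (simp add: mult.assoc)
qed (simp_all add: distrib_left hecke_ideal.intros)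

lemma hecke_ideal_mult_right:
  "x \<in> hecke_ideal q qi r \<Longrightarrow> c \<in> free_carrier r \<Longrightarrow> x * c \<in> hecke_ideal q qi r"
proof (induction rule: hecke_ideal.induct)
  case (gen g a b)
  then show ?case using hecke_ideal.gen[of g q qi r a "b * c"] by (simp add: mult.assoc)
qed (simp_all add: distrib_right hecke_ideal.intros)

lemma hecke_ideal_uminus: "x \<in> hecke_ideal q qi r \<Longrightarrow> - x \<in> hecke_ideal q qi r"
  using hecke_ideal_mult_left[of x q qi r "- 1"] by simp

lemma hecke_ideal_diff:
  "x \<in> hecke_ideal q qi r \<Longrightarrow> y \<in> hecke_ideal q qi r \<Longrightarrow> x - y \<in> hecke_ideal q qi r"
  using hecke_ideal.add[OF _ hecke_ideal_uminus, of x q qi r y] by simp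

lemma hecke_eq_refl [simp]: "hecke_eq q qi r a a"
  by (simp add: hecke_eq_def hecke_ideal.zero)

lemma hecke_eq_sym: "hecke_eq q qi r a b \<Longrightarrow> hecke_eq q qi r b a"
  unfolding hecke_eq_def using hecke_ideal_uminus by fastforce

lemma hecke_eq_trans [trans]: "hecke_eq q qi r a b \<Longrightarrow> hecke_eq q qi r b c \<Longrightarrow> hecke_eq q qi r a c"
  unfolding hecke_eq_def using hecke_ideal.add by fastforce

lemma hecke_eq_add:
  "hecke_eq q qi r a b \<Longrightarrow> hecke_eq q qi r c d \<Longrightarrow> hecke_eq q qi r (a + c) (b + d)"
  unfolding hecke_eq_def using hecke_ideal.add by (fastforce simp: algebra_simps)

lemma hecke_eq_diff:
  "hecke_eq q qi r a b \<Longrightarrow> hecke_eq q qi r c d \<Longrightarrow> hecke_eq q qi r (a - c) (b - d)"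
  unfolding hecke_eq_def using hecke_ideal_diff by (fastforce simp: algebra_simps)

lemma hecke_eq_mult_left:
  "hecke_eq q qi r a b \<Longrightarrow> c \<in> free_carrier r \<Longrightarrow> hecke_eq q qi r (c * a) (c * b)"
  unfolding hecke_eq_def using hecke_ideal_mult_left by (fastforce simp: algebra_simps)

lemma hecke_eq_mult_right:
  "hecke_eq q qi r a b \<Longrightarrow> c \<in> free_carrier r \<Longrightarrow> hecke_eq q qi r (a * c) (b * c)"
  unfolding hecke_eq_def using hecke_ideal_mult_right by (fastforce simp: algebra_simps)

lemma hecke_eq_mult:
  assumes "hecke_eq q qi r a b" "hecke_eq q qi r c d" "b \<in> free_carrier r" "c \<in> free_carrier r"
  shows "hecke_eq q qi r (a * c) (b * d)"
  using assms by (meson hecke_eq_mult_left hecke_eq_mult_right hecke_eq_trans)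

section \<open>The Goldman involution\<close>

lemma goldman_add: "goldman q qi (x + y) = goldman q qi x + goldman q qi y"
  by (simp add: goldman_def free_eval_add)

lemma goldman_diff: "goldman q qi (x - y) = goldman q qi x - goldman q qi y"
  by (simp add: goldman_def free_eval_diff)

lemma goldman_mult: "goldman q qi (x * y) = goldman q qi x * goldman q qi y"
  by (simp add: goldman_def free_eval_mult)

lemma goldman_0 [simp]: "goldman q qi 0 = 0"
  by (simp add: goldman_def)

lemma goldman_fconst [simp]: "goldman q qi (fconst c) = fconst c"
  by (simp add: goldman_def)

lemma goldman_1 [simp]: "goldman q qi 1 = 1"
  by (simp add: goldman_def)

lemma goldman_gen [simp]: "goldman q qi (gen i) = fconst (q - qi) - gen i"
  by (simp add: goldman_def)

lemma goldman_goldman [simp]: "goldman q qi (goldman q qi x) = x"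
proof -
  have "goldman q qi (goldman q qi (Poly_Mapping.single w c)) = Poly_Mapping.single w c" for w c
    by (simp add: goldman_def free_eval_single word_eval_def free_eval_mult free_eval_prod_list
        free_eval_diff o_def single_eq_fconst_mult_gens)
  then show ?thesis
    by (subst (1 2) poly_mapping_sum_single[of x]) (simp add: goldman_def free_eval_sum)
qed

lemma goldman_in_free_carrier: "x \<in> free_carrier r \<Longrightarrow> goldman q qi x \<in> free_carrier r"
  unfolding goldman_def by (rule free_eval_in_free_carrier) (simp_all add: gen_in_free_carrier)

lemma quadratic_relator_reflect:
  fixes A C :: "'a::ring_1"
  assumes "C * A = A * C"
  shows "(C - A) * (C - A) - (C * (C - A) + 1) = A * A - (C * A + 1)"
  using assms by (simp add: algebra_simps)

lemma braid_relator_reflect: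
  fixes A B C :: "'a::ring_1"
  assumes "C * A = A * C" "C * B = B * C"
  shows "(C - A) * (C - B) * (C - A) - (C - B) * (C - A) * (C - B)
       = - (A * B * A - B * A * B) + C * (A * A - (C * A + 1)) - C * (B * B - (C * B + 1))"
proof -
  have "A * (C * X) = C * (A * X)" "B * (C * X) = C * (B * X)" for X
    using assms by (metis mult.assoc)+
  then show ?thesis using assms[symmetric] by (simp add: algebra_simps)
qed

lemma commutation_relator_reflect:
  fixes A B C :: "'a::ring_1"
  assumes "C * A = A * C" "C * B = B * C"
  shows "(C - A) * (C - B) - (C - B) * (C - A) = A * B - B * A"
proof -
  have "A * (C * X) = C * (A * X)" "B * (C * X) = C * (B * X)" for X
    using assms by (metis mult.assoc)+
  then show ?thesis using assms[symmetric] by (simp add: algebra_simps)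
qed

lemma goldman_relator_in_hecke_ideal:
  assumes rel: "g \<in> hecke_relators q qi r"
  shows "goldman q qi g \<in> hecke_ideal q qi r"
proof -
  let ?C = "fconst (q - qi)"
  have C: "?C * x = x * ?C" for x by (rule fconst_commute)
  from rel consider
      (quadratic) i where "g = gen i * gen i - (?C * gen i + 1)"
    | (braid) i where "g = gen i * gen (i + 1) * gen i - gen (i + 1) * gen i * gen (i + 1)"
        "1 \<le> i" "i + 1 < r"
    | (commute) i j where "g = gen i * gen j - gen j * gen i"
    unfolding hecke_relators_def by blast
  then show ?thesis
  proof cases
    case quadratic
    then have "goldman q qi g = g"
      using quadratic_relator_reflect[OF C] by (simp add: goldman_diff goldman_mult goldman_add)
    with rel show ?thesis by (simp add: relator_in_hecke_ideal)
  next
    case braid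
    let ?A = "gen i" and ?B = "gen (i + 1)"
    have "?A * ?A - (?C * ?A + 1) \<in> hecke_ideal q qi r" "?B * ?B - (?C * ?B + 1) \<in> hecke_ideal q qi r"
      using braid by (intro relator_in_hecke_ideal; auto simp: hecke_relators_def)+
    moreover have "goldman q qi g
        = - g + ?C * (?A * ?A - (?C * ?A + 1)) - ?C * (?B * ?B - (?C * ?B + 1))"
      using braid braid_relator_reflect[OF C C] by (simp add: goldman_diff goldman_mult goldman_add)
    ultimately show ?thesis
      using relator_in_hecke_ideal[OF rel]
      by (metis fconst_in_free_carrier hecke_ideal.add hecke_ideal_diff hecke_ideal_uminus
          hecke_ideal_mult_left)
  next
    case commute
    then have "goldman q qi g = g"
      using commutation_relator_reflect[OF C C] by (simp add: goldman_diff goldman_mult)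
    with rel show ?thesis by (simp add: relator_in_hecke_ideal)
  qed
qed

lemma goldman_hecke_ideal: "x \<in> hecke_ideal q qi r \<Longrightarrow> goldman q qi x \<in> hecke_ideal q qi r"
proof (induction rule: hecke_ideal.induct)
  case (gen g a b)
  then show ?case
    by (simp add: goldman_mult hecke_ideal_mult_left hecke_ideal_mult_right
        goldman_relator_in_hecke_ideal goldman_in_free_carrier)
qed (simp_all add: goldman_add hecke_ideal.intros)

lemma hecke_eq_goldman: "hecke_eq q qi r a b \<Longrightarrow> hecke_eq q qi r (goldman q qi a) (goldman q qi b)"
  unfolding hecke_eq_def by (metis goldman_diff goldman_hecke_ideal)

lemma hecke1_add: "a \<in> hecke1 q qi r \<Longrightarrow> b \<in> hecke1 q qi r \<Longrightarrow> a + b \<in> hecke1 q qi r"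
  by (auto simp: hecke1_def goldman_add intro: hecke_eq_add)

lemma hecke1_diff: "a \<in> hecke1 q qi r \<Longrightarrow> b \<in> hecke1 q qi r \<Longrightarrow> a - b \<in> hecke1 q qi r"
  by (auto simp: hecke1_def goldman_diff intro: hecke_eq_diff)

lemma hecke1_mult: "a \<in> hecke1 q qi r \<Longrightarrow> b \<in> hecke1 q qi r \<Longrightarrow> a * b \<in> hecke1 q qi r"
  by (simp add: hecke1_def goldman_mult hecke_eq_mult goldman_in_free_carrier)

lemma hecke1_in_free_carrier: "a \<in> hecke1 q qi r \<Longrightarrow> a \<in> free_carrier r"
  by (simp add: hecke1_def)

section \<open>The element \<open>T'\<^sub>1\<close>\<close>

lemma affine_square_identity:
  fixes a b c g :: "'a::ring_1"
  assumes "a * g = g * a" "b * g = g * b" "a * b = b * a"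
  shows "(a * g - b) * (a * g - b) - 1
         = a * a * (g * g - (c * g + 1)) + (a * a * c - (a * b + a * b)) * g + (a * a + b * b - 1)"
proof -
  have "g * (a * x) = a * (g * x)" "g * (b * x) = b * (g * x)" "b * (a * x) = a * (b * x)" for x
    using assms by (metis mult.assoc)+
  then show ?thesis using assms[symmetric] by (simp add: algebra_simps)
qed

locale hecke_units =
  fixes q qi e t :: "'r::comm_ring_1" and r :: nat
  assumes r_ge_2: "2 \<le> r"
    and q_qi: "q * qi = 1"
    and two_t: "2 * t = 1"
    and e_q_qi: "e * (q + qi) = 1"
begin

abbreviation T' :: "'r freealg" where "T' \<equiv> Tprime e q qi"

abbreviation hecke_equiv :: "'r freealg \<Rightarrow> 'r freealg \<Rightarrow> bool" (infix "\<approx>" 50)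
  where "a \<approx> b \<equiv> hecke_eq q qi r a b"

lemma half_double: "fconst t * (x + x) = x"
proof -
  have "fconst t * (x + x) = (fconst t + fconst t) * x"
    by (simp add: algebra_simps)
  also have "fconst t + fconst t = fconst (2 * t)"
    by (simp only: mult_2 fconst_add)
  finally show ?thesis by (simp add: two_t)
qed

lemma Tprime_in_free_carrier [simp]: "T' \<in> free_carrier r"
  using r_ge_2 by (simp add: Tprime_def gen_in_free_carrier)

lemma goldman_Tprime: "goldman q qi T' = - T'"
  by (simp add: Tprime_def goldman_mult goldman_diff goldman_add mult_2 algebra_simps)

lemma Tprime_square_minus_one: "T' * T' - 1 \<in> hecke_ideal q qi r"
proof -
  let ?g = "gen 1 :: 'r freealg" and ?C = "q - qi" and ?a = "e + e" and ?b = "e * (q - qi)"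
  have "T' = fconst ?a * ?g - fconst ?b"
    by (simp only: Tprime_def mult_2 fconst_add fconst_mult) (simp add: algebra_simps)
  then have "T' * T' - 1
      = fconst ?a * fconst ?a * (?g * ?g - (fconst ?C * ?g + 1))
        + (fconst ?a * fconst ?a * fconst ?C - (fconst ?a * fconst ?b + fconst ?a * fconst ?b)) * ?g
        + (fconst ?a * fconst ?a + fconst ?b * fconst ?b - 1)"
    by (simp only: affine_square_identity[OF fconst_commute fconst_commute fconst_commute])
  also have "fconst ?a * fconst ?a * fconst ?C - (fconst ?a * fconst ?b + fconst ?a * fconst ?b)
      = fconst (?a * ?a * ?C - (?a * ?b + ?a * ?b))"
    by (simp only: fconst_mult fconst_add fconst_diff)
  also have "?a * ?a * ?C - (?a * ?b + ?a * ?b) = 0"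
    by (simp add: algebra_simps)
  also have "fconst ?a * fconst ?a + fconst ?b * fconst ?b - 1 = fconst (?a * ?a + ?b * ?b - 1)"
    by (simp only: fconst_mult fconst_add fconst_diff fconst_1)
  also have "?a * ?a + ?b * ?b - 1 = (e * (q + qi)) * (e * (q + qi)) + 4 * (e * e) * (1 - q * qi) - 1"
    by (simp add: algebra_simps)
  also have "\<dots> = 0"
    using q_qi e_q_qi by simp
  finally have "T' * T' - 1 = fconst ?a * fconst ?a * (?g * ?g - (fconst ?C * ?g + 1))"
    by simp
  moreover have "?g * ?g - (fconst ?C * ?g + 1) \<in> hecke_relators q qi r"
    using r_ge_2 unfolding hecke_relators_def by auto
  ultimately show ?thesis
    by (simp add: hecke_ideal_mult_left relator_in_hecke_ideal)
qed

lemma Tprime_square: "T' * T' \<approx> 1"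
  using Tprime_square_minus_one by (simp add: hecke_eq_def)

lemma Tprime_conj_conj:
  assumes "a \<in> free_carrier r"
  shows "T' * (T' * a * T') * T' \<approx> a"
proof -
  have "T' * (T' * a * T') * T' = (T' * T') * a * (T' * T')"
    by (simp add: mult.assoc)
  also have "\<dots> \<approx> 1 * a * 1"
    using assms by (intro hecke_eq_mult Tprime_square hecke_eq_refl) simp_all
  finally show ?thesis by simp
qed

lemma Tprime_conj_mult:
  assumes "a \<in> free_carrier r" "b \<in> free_carrier r"
  shows "T' * (a * b) * T' \<approx> (T' * a * T') * (T' * b * T')"
proof -
  have "T' * (a * b) * T' = (T' * a) * 1 * (b * T')"
    by (simp add: mult.assoc)
  also have "\<dots> \<approx> (T' * a) * (T' * T') * (b * T')"
    using assms by (intro hecke_eq_mult hecke_eq_sym[OF Tprime_square] hecke_eq_refl) simp_all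
  also have "\<dots> = (T' * a * T') * (T' * b * T')"
    by (simp add: mult.assoc)
  finally show ?thesis .
qed

lemma Tprime_conj_in_hecke1:
  assumes "a \<in> hecke1 q qi r"
  shows "T' * a * T' \<in> hecke1 q qi r"
proof -
  have "goldman q qi (T' * a * T') = T' * goldman q qi a * T'"
    by (simp add: goldman_mult goldman_Tprime)
  moreover have "T' * goldman q qi a * T' \<approx> T' * a * T'"
    using assms by (intro hecke_eq_mult_left hecke_eq_mult_right) (simp_all add: hecke1_def)
  ultimately show ?thesis
    using assms by (simp add: hecke1_def)
qed

lemma hecke1_Tprime_decomposition:
  assumes h: "h \<in> free_carrier r"
  shows "\<exists>a1\<in>hecke1 q qi r. \<exists>a2\<in>hecke1 q qi r. h \<approx> a1 + a2 * T'"
proof -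
  let ?G = "goldman q qi"
  define a1 where "a1 = fconst t * (h + ?G h)"
  define a2 where "a2 = fconst t * (h - ?G h) * T'"
  have Gh: "?G h \<in> free_carrier r"
    using h by (rule goldman_in_free_carrier)
  have "a1 \<in> hecke1 q qi r"
    using h Gh by (simp add: a1_def hecke1_def goldman_mult goldman_add add.commute)
  moreover have "a2 \<in> hecke1 q qi r"
    using h Gh by (simp add: a2_def hecke1_def goldman_mult goldman_diff goldman_Tprime algebra_simps)
  moreover have "h \<approx> a1 + a2 * T'"
  proof -
    have "h = fconst t * (h + h)"
      by (rule half_double[symmetric])
    also have "\<dots> = a1 + fconst t * (h - ?G h) * 1"
      by (simp add: a1_def algebra_simps)
    also have "\<dots> \<approx> a1 + fconst t * (h - ?G h) * (T' * T')"
      using h Gh by (intro hecke_eq_add hecke_eq_mult_left hecke_eq_sym[OF Tprime_square] hecke_eq_refl)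
        simp
    also have "\<dots> = a1 + a2 * T'"
      by (simp add: a2_def mult.assoc)
    finally show ?thesis .
  qed
  ultimately show ?thesis by blast
qed

lemma hecke1_Tprime_independent:
  assumes d1: "d1 \<in> hecke1 q qi r" and d2: "d2 \<in> hecke1 q qi r" and sum: "d1 + d2 * T' \<approx> 0"
  shows "d1 \<approx> 0" "d2 \<approx> 0"
proof -
  let ?G = "goldman q qi"
  have "?G (d1 + d2 * T') = ?G d1 - ?G d2 * T'"
    by (simp add: goldman_add goldman_mult goldman_Tprime)
  also have "\<dots> \<approx> d1 - d2 * T'"
    using d1 d2 by (intro hecke_eq_diff hecke_eq_mult_right) (simp_all add: hecke1_def)
  finally have "d1 - d2 * T' \<approx> 0"
    using hecke_eq_goldman[OF sum] by (metis goldman_0 hecke_eq_sym hecke_eq_trans)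
  with sum have "(d1 + d2 * T') + (d1 - d2 * T') \<approx> 0 + 0"
    by (rule hecke_eq_add)
  then have "fconst t * (d1 + d1) \<approx> fconst t * 0"
    by (intro hecke_eq_mult_left) (simp_all add: algebra_simps)
  then show d1_0: "d1 \<approx> 0"
    by (simp add: half_double)
  have "d2 * T' = (d1 + d2 * T') - d1"
    by simp
  also have "\<dots> \<approx> 0 - 0"
    using sum d1_0 by (rule hecke_eq_diff)
  finally have "d2 * T' * T' \<approx> 0 * T'"
    by (intro hecke_eq_mult_right) simp_all
  then have "d2 * (T' * T') \<approx> 0"
    by (simp add: mult.assoc)
  moreover have "d2 \<approx> d2 * (T' * T')"
    using d2 by (intro hecke_eq_mult_left[of _ _ _ 1, simplified] hecke_eq_sym[OF Tprime_square])
      (simp add: hecke1_def)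
  ultimately show "d2 \<approx> 0"
    by (rule hecke_eq_trans[rotated])
qed

lemma hecke1_Tprime_unique:
  assumes "a1 \<in> hecke1 q qi r" "a2 \<in> hecke1 q qi r" "b1 \<in> hecke1 q qi r" "b2 \<in> hecke1 q qi r"
    and "a1 + a2 * T' \<approx> b1 + b2 * T'"
  shows "a1 \<approx> b1 \<and> a2 \<approx> b2"
proof -
  have "(a1 + a2 * T') - (b1 + b2 * T') \<approx> 0"
    using assms(5) by (simp add: hecke_eq_def)
  moreover have "(a1 + a2 * T') - (b1 + b2 * T') = (a1 - b1) + (a2 - b2) * T'"
    by (simp add: algebra_simps)
  ultimately have "(a1 - b1) + (a2 - b2) * T' \<approx> 0"
    by simp
  from hecke1_Tprime_independent[OF hecke1_diff[OF assms(1,3)] hecke1_diff[OF assms(2,4)] this]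
  show ?thesis
    by (simp add: hecke_eq_def)
qed

end

section \<open>The crossed product\<close>

lemma ball_Z2: "(\<forall>\<sigma>\<in>Z2. P \<sigma>) \<longleftrightarrow> P 1 \<and> P (- 1)"
  by (simp add: Z2_def)

lemma mem_cp_carrier_Z2:
  "x \<in> cp_carrier Z2 A \<longleftrightarrow> x 1 \<in> A \<and> x (- 1) \<in> A \<and> (\<forall>\<sigma>. \<sigma> \<noteq> 1 \<and> \<sigma> \<noteq> - 1 \<longrightarrow> x \<sigma> = 0)"
  by (auto simp: cp_carrier_def Z2_def)

lemma cp_mult_Z2_psi0:
  "cp_mult Z2 (psi0 T) alpha0 x y \<rho> =
    (if \<rho> = 1 then x 1 * y 1 + x (- 1) * (T * y (- 1) * T)
     else if \<rho> = - 1 then x 1 * y (- 1) + x (- 1) * (T * y 1 * T) else 0)"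
  by (simp add: cp_mult_def Z2_def psi0_def alpha0_def)

lemma psi0_add: "psi0 T \<sigma> (a + b) = psi0 T \<sigma> a + psi0 T \<sigma> b"
  by (simp add: psi0_def algebra_simps)

lemma psi0_fconst: "psi0 T \<sigma> (fconst (c::'r::comm_ring_1) * a) = fconst c * psi0 T \<sigma> a"
proof -
  have "T * (fconst c * a) * T = fconst c * (T * a * T)"
    by (metis fconst_commute mult.assoc)
  then show ?thesis by (simp add: psi0_def)
qed

lemma Phi_cp_add: "Phi T (cp_add x y) = Phi T x + Phi T y"
  by (simp add: Phi_def cp_add_def algebra_simps)

lemma Phi_cp_smult: "Phi T (cp_smult c x) = fconst c * Phi T x"
  by (simp add: Phi_def cp_smult_def algebra_simps)

lemma Phi_cp_one: "Phi T cp_one = 1"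
  by (simp add: Phi_def cp_one_def)

context hecke_units
begin

lemma psi0_in_hecke1: "\<sigma> \<in> Z2 \<Longrightarrow> a \<in> hecke1 q qi r \<Longrightarrow> psi0 T' \<sigma> a \<in> hecke1 q qi r"
  by (simp add: psi0_def Tprime_conj_in_hecke1)

lemma psi0_hecke_eq: "a \<approx> b \<Longrightarrow> psi0 T' \<sigma> a \<approx> psi0 T' \<sigma> b"
  by (simp add: psi0_def hecke_eq_mult_left hecke_eq_mult_right)

lemma psi0_mult:
  "a \<in> free_carrier r \<Longrightarrow> b \<in> free_carrier r \<Longrightarrow> psi0 T' \<sigma> (a * b) \<approx> psi0 T' \<sigma> a * psi0 T' \<sigma> b"
  by (simp add: psi0_def Tprime_conj_mult)

lemma psi0_one: "psi0 T' \<sigma> 1 \<approx> 1"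
  by (simp add: psi0_def Tprime_square)

lemma psi0_psi0:
  "\<sigma> \<in> Z2 \<Longrightarrow> \<tau> \<in> Z2 \<Longrightarrow> a \<in> free_carrier r \<Longrightarrow>
    psi0 T' \<sigma> (psi0 T' \<tau> a) \<approx> alpha0 \<sigma> \<tau> * psi0 T' (\<sigma> * \<tau>) a * alpha0 \<sigma> \<tau>"
  by (auto simp: Z2_def psi0_def alpha0_def Tprime_conj_conj)

lemma psi0_cancel:
  assumes "a \<in> free_carrier r" "b \<in> free_carrier r" "psi0 T' \<sigma> a \<approx> psi0 T' \<sigma> b"
  shows "a \<approx> b"
proof (cases "\<sigma> = 1")
  case False
  have "a \<approx> T' * (T' * a * T') * T'"
    using Tprime_conj_conj[OF assms(1)] by (rule hecke_eq_sym)
  also have "\<dots> \<approx> T' * (T' * b * T') * T'"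
    using assms(3) False by (simp add: psi0_def hecke_eq_mult_left hecke_eq_mult_right)
  also have "\<dots> \<approx> b"
    using assms(2) by (rule Tprime_conj_conj)
  finally show ?thesis .
qed (use assms in \<open>simp add: psi0_def\<close>)

lemma psi0_surj:
  assumes "\<sigma> \<in> Z2" "b \<in> hecke1 q qi r"
  shows "\<exists>a\<in>hecke1 q qi r. psi0 T' \<sigma> a \<approx> b"
proof
  show "psi0 T' \<sigma> b \<in> hecke1 q qi r"
    using assms by (rule psi0_in_hecke1)
  show "psi0 T' \<sigma> (psi0 T' \<sigma> b) \<approx> b"
    using psi0_psi0[OF assms(1) assms(1) hecke1_in_free_carrier[OF assms(2)]] assms(1)
    by (auto simp: Z2_def psi0_def alpha0_def)
qed

lemma cp_mult_in_cp_carrier: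
  assumes "x \<in> cp_carrier Z2 (hecke1 q qi r)" "y \<in> cp_carrier Z2 (hecke1 q qi r)"
  shows "cp_mult Z2 (psi0 T') alpha0 x y \<in> cp_carrier Z2 (hecke1 q qi r)"
  using assms unfolding mem_cp_carrier_Z2 cp_mult_Z2_psi0
  by (auto intro!: hecke1_add hecke1_mult Tprime_conj_in_hecke1)

lemma Phi_in_free_carrier: "x \<in> cp_carrier Z2 (hecke1 q qi r) \<Longrightarrow> Phi T' x \<in> free_carrier r"
  by (auto simp: mem_cp_carrier_Z2 Phi_def hecke1_in_free_carrier)

lemma Phi_hecke_eq: "\<forall>\<sigma>\<in>Z2. x \<sigma> \<approx> y \<sigma> \<Longrightarrow> Phi T' x \<approx> Phi T' y"
  by (simp add: ball_Z2 Phi_def hecke_eq_add hecke_eq_mult_right)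

lemma Phi_cp_mult:
  assumes "x \<in> cp_carrier Z2 (hecke1 q qi r)" "y \<in> cp_carrier Z2 (hecke1 q qi r)"
  shows "Phi T' (cp_mult Z2 (psi0 T') alpha0 x y) \<approx> Phi T' x * Phi T' y"
proof -
  have "Phi T' (cp_mult Z2 (psi0 T') alpha0 x y) - Phi T' x * Phi T' y
      = x (- 1) * T' * y 1 * (T' * T' - 1)"
    by (simp add: Phi_def cp_mult_Z2_psi0 algebra_simps)
  moreover have "x (- 1) * T' * y 1 * (T' * T' - 1) \<in> hecke_ideal q qi r"
    using assms by (auto simp: mem_cp_carrier_Z2 hecke1_in_free_carrier
        intro!: hecke_ideal_mult_left Tprime_square_minus_one)
  ultimately show ?thesis
    by (simp add: hecke_eq_def)
qed

lemma Phi_cancel: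
  assumes "x \<in> cp_carrier Z2 (hecke1 q qi r)" "y \<in> cp_carrier Z2 (hecke1 q qi r)"
    and "Phi T' x \<approx> Phi T' y"
  shows "\<forall>\<sigma>\<in>Z2. x \<sigma> \<approx> y \<sigma>"
  using assms hecke1_Tprime_unique[of "x 1" "x (- 1)" "y 1" "y (- 1)"]
  by (simp add: ball_Z2 mem_cp_carrier_Z2 Phi_def)

lemma Phi_surj:
  assumes "h \<in> free_carrier r"
  shows "\<exists>x\<in>cp_carrier Z2 (hecke1 q qi r). Phi T' x \<approx> h"
proof -
  obtain a1 a2 where a: "a1 \<in> hecke1 q qi r" "a2 \<in> hecke1 q qi r" "h \<approx> a1 + a2 * T'"
    using hecke1_Tprime_decomposition[OF assms] by blast
  define x :: "int \<Rightarrow> 'r freealg" where "x \<sigma> = (if \<sigma> = 1 then a1 else if \<sigma> = - 1 then a2 else 0)" for \<sigma>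
  have "x \<in> cp_carrier Z2 (hecke1 q qi r)"
    using a by (simp add: x_def mem_cp_carrier_Z2)
  moreover have "Phi T' x \<approx> h"
    using a(3) by (simp add: x_def Phi_def hecke_eq_sym)
  ultimately show ?thesis by blast
qed

end

theorem theorem3p9:
  fixes q qi e :: "'r::idom" and r :: nat
  assumes r2: "r \<ge> 2"
    and qinv: "q * qi = 1"
    and two_unit: "\<exists>t::'r. 2 * t = 1"
    and einv: "e * (q + qi) = 1"
  defines "eq \<equiv> hecke_eq q qi r"
    and "H \<equiv> free_carrier r :: 'r freealg set"
    and "H1 \<equiv> hecke1 q qi r"
    and "T' \<equiv> Tprime e q qi"
    and "\<psi> \<equiv> psi0 (Tprime e q qi)"
    and "C \<equiv> cp_carrier Z2 (hecke1 q qi r)"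
    and "cpeq \<equiv> (\<lambda>x y. \<forall>\<sigma>\<in>Z2. hecke_eq q qi r (x \<sigma>) (y \<sigma>))"
  shows
    \<comment> \<open>(H^1, Z_2, psi_0, alpha_0) is a crossed system: each psi_0(sigma) is an
        R_0-algebra automorphism of H^1 and psi_0(s)psi_0(t) = alpha psi_0(st) alpha^{-1}\<close>
    "(\<forall>\<sigma>\<in>Z2. \<forall>a\<in>H1. \<psi> \<sigma> a \<in> H1)
   \<and> (\<forall>\<sigma>\<in>Z2. \<forall>a\<in>H1. \<forall>b\<in>H1. eq a b \<longrightarrow> eq (\<psi> \<sigma> a) (\<psi> \<sigma> b))
   \<and> (\<forall>\<sigma>\<in>Z2. \<forall>a\<in>H1. \<forall>b\<in>H1. eq (\<psi> \<sigma> (a + b)) (\<psi> \<sigma> a + \<psi> \<sigma> b))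
   \<and> (\<forall>\<sigma>\<in>Z2. \<forall>a\<in>H1. \<forall>b\<in>H1. eq (\<psi> \<sigma> (a * b)) (\<psi> \<sigma> a * \<psi> \<sigma> b))
   \<and> (\<forall>\<sigma>\<in>Z2. \<forall>c. \<forall>a\<in>H1. eq (\<psi> \<sigma> (fconst c * a)) (fconst c * \<psi> \<sigma> a))
   \<and> (\<forall>\<sigma>\<in>Z2. eq (\<psi> \<sigma> 1) 1)
   \<and> (\<forall>\<sigma>\<in>Z2. \<forall>a\<in>H1. \<forall>b\<in>H1. eq (\<psi> \<sigma> a) (\<psi> \<sigma> b) \<longrightarrow> eq a b)
   \<and> (\<forall>\<sigma>\<in>Z2. \<forall>b\<in>H1. \<exists>a\<in>H1. eq (\<psi> \<sigma> a) b)
   \<and> (\<forall>\<sigma>\<in>Z2. \<forall>\<tau>\<in>Z2. \<forall>a\<in>H1.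
        eq (\<psi> \<sigma> (\<psi> \<tau> a)) (alpha0 \<sigma> \<tau> * \<psi> (\<sigma> * \<tau>) a * alpha0 \<sigma> \<tau>))
   \<and> (\<forall>x\<in>C. \<forall>y\<in>C. cp_mult Z2 \<psi> alpha0 x y \<in> C)
   \<and> (\<forall>x\<in>C. \<forall>y\<in>C. cpeq x y \<longrightarrow> eq (Phi T' x) (Phi T' y))
   \<and> (\<forall>x\<in>C. Phi T' x \<in> H)
   \<and> (\<forall>x\<in>C. \<forall>y\<in>C. Phi T' (cp_add x y) = Phi T' x + Phi T' y)
   \<and> (\<forall>c. \<forall>x\<in>C. Phi T' (cp_smult c x) = fconst c * Phi T' x)
   \<and> (\<forall>x\<in>C. \<forall>y\<in>C. eq (Phi T' (cp_mult Z2 \<psi> alpha0 x y)) (Phi T' x * Phi T' y))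
   \<and> Phi T' cp_one = 1
   \<and> (\<forall>x\<in>C. \<forall>y\<in>C. eq (Phi T' x) (Phi T' y) \<longrightarrow> cpeq x y)
   \<and> (\<forall>h\<in>H. \<exists>x\<in>C. eq (Phi T' x) h)
   \<and> (\<forall>h\<in>H. \<exists>a1\<in>H1. \<exists>a2\<in>H1. eq h (a1 + a2 * T'))
   \<and> (\<forall>a1\<in>H1. \<forall>a2\<in>H1. \<forall>b1\<in>H1. \<forall>b2\<in>H1.
        eq (a1 + a2 * T') (b1 + b2 * T') \<longrightarrow> eq a1 b1 \<and> eq a2 b2)"
proof -
  obtain t :: 'r where "2 * t = 1"
    using two_unit by blast
  then interpret hecke_units q qi e t r
    using r2 qinv einv by unfold_locales
  show ?thesis
    unfolding eq_def H_def H1_def T'_def \<psi>_def C_def cpeq_def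
    by (intro conjI)
      (simp_all add: hecke1_in_free_carrier psi0_add psi0_fconst psi0_in_hecke1 psi0_hecke_eq
        psi0_mult psi0_one psi0_surj psi0_psi0 cp_mult_in_cp_carrier Phi_hecke_eq Phi_in_free_carrier
        Phi_cp_add Phi_cp_smult Phi_cp_mult Phi_cp_one Phi_cancel Phi_surj
        hecke1_Tprime_decomposition hecke1_Tprime_unique,
       blast intro: psi0_cancel hecke1_in_free_carrier)
qed

end
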